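(* Let $(Z,\|\cdot\|_Z)$ be a real Banach space. Fix $p\in[2,\infty)$, $\gamma\in(0,1)$, $m,n\in\mathbb N$ and $k\in\{1,\ldots,n\}$. Suppose that every $f:\mathbb Z_{2m}^n\to Z$ satisfies $$\frac{\gamma}{2^n\binom nk}\sum_{\substack{S\subset\{1,\ldots,n\}\\|S|=k}}\sum_{\varepsilon\in\{-1,1\}^n}\sum_{x\in\mathbb Z_{2m}^n}\frac{\|f(x+m\varepsilon_S)-f(x)\|_Z^p}{m^p}\le\frac kn\sum_{j=1}^n\sum_{x\in\mathbb Z_{2m}^n}\|f(x+e_j)-f(x)\|_Z^p+\frac{(k/n)^{p/2}}{2^n}\sum_{\varepsilon\in\{-1,1\}^n}\sum_{x\in\mathbb Z_{2m}^n}\|f(x+\varepsilon)-f(x)\|_Z^p.$$ Then for every $z_1,\ldots,z_n\in Z$, $$\frac{(2/\pi)^{2p}\gamma}{2^n\binom nk}\sum_{\substack{S\subset\{1,\ldots,n\}\\|S|=k}}\sum_{\varepsilon\in\{-1,1\}^n}\Big\|\sum_{j\in S}\varepsilon_jz_j\Big\|_Z^p\le\frac kn\sum_{j=1}^n\|z_j\|_Z^p+\frac{(k/n)^{p/2}}{2^n}\sum_{\varepsilon\in\{-1,1\}^n}\Big\|\sum_{j=1}^n\varepsilon_jz_j\Big\|_Z^p.$$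
   Context: $\mathbb Z_M^n=(\mathbb Z/M\mathbb Z)^n$, integer vectors added modulo $M$. $e_j$ standard basis vectors; $\varepsilon_S=\sum_{j\in S}\varepsilon_je_j$. *)

theory Defs
  imports "HOL-Analysis.Analysis"
begin

text \<open>The discrete torus (Z/2mZ)^n, coordinates indexed by {1..n},
  each coordinate represented by its residue in {0..<2m}.\<close>
definition torus :: "nat \<Rightarrow> nat \<Rightarrow> (nat \<Rightarrow> int) set" where
  "torus m n = PiE {1..n} (\<lambda>_. {0..<2 * int m})"

definition tadd :: "nat \<Rightarrow> nat \<Rightarrow> (nat \<Rightarrow> int) \<Rightarrow> (nat \<Rightarrow> int) \<Rightarrow> (nat \<Rightarrow> int)" where
  "tadd m n x y = restrict (\<lambda>i. (x i + y i) mod (2 * int m)) {1..n}"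

definition signs :: "nat \<Rightarrow> (nat \<Rightarrow> int) set" where
  "signs n = PiE {1..n} (\<lambda>_. {-1, 1})"

definition ebasis :: "nat \<Rightarrow> nat \<Rightarrow> int" where
  "ebasis j = (\<lambda>i. if i = j then 1 else 0)"

definition epsS :: "(nat \<Rightarrow> int) \<Rightarrow> nat set \<Rightarrow> nat \<Rightarrow> int" where
  "epsS eps S = (\<lambda>j. if j \<in> S then eps j else 0)"

end

theory Submission
  imports Defs
begin

(* Apply the hypothesis to the test function
     f(x) = sum_j tent(x_j) z_j,
   where tent : Z_2m -> R is the tent map t |-> |t - m| - m/2 (t read in {0..<2m}).
   The tent map has unit slopes and is antiperiodic: tent(t + m) = - tent(t).  Hence
   (i)   an edge increment f(x + e_j) - f(x) is +-z_j;
   (ii)  a diagonal increment f(x + eps) - f(x) is sum_j +-z_j; translating x by m in the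
         coordinates where a sign d is -1 flips exactly those signs, so averaging over the
         torus reproduces the Rademacher average of ||sum_j d_j z_j||^p;
   (iii) a face increment f(x + m eps_S) - f(x) equals -2 sum_{j in S} tent(x_j) z_j; the same
         sign symmetrisation plus Jensen's inequality and  mean |tent| >= m/4  bound its
         average below by (m/2)^p times the Rademacher average over S.
   Inserting (i)-(iii) into the hypothesis and dividing by |torus| = (2m)^n yields the claim
   with the constant (1/2)^p, which dominates (2/pi)^(2p). *)

definition tent :: "nat \<Rightarrow> int \<Rightarrow> real" where
  "tent m t = \<bar>real_of_int (t mod (2 * int m)) - real m\<bar> - real m / 2"

lemma tent_mod: "tent m (t mod (2 * int m)) = tent m t"
  by (simp add: tent_def)

lemma tent_antiperiodic:
  assumes "1 \<le> m" shows "tent m (t + int m) = - tent m t"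
proof -
  define r where "r = t mod (2 * int m)"
  have r: "0 \<le> r" "r < 2 * int m" using assms by (auto simp: r_def)
  have shift: "(t + int m) mod (2 * int m) = (r + int m) mod (2 * int m)"
    unfolding r_def by (simp add: mod_add_left_eq)
  show ?thesis
  proof (cases "r < int m")
    case True
    then have "(t + int m) mod (2 * int m) = r + int m"
      unfolding shift using r by (intro mod_pos_pos_trivial) auto
    then show ?thesis using True r unfolding tent_def r_def[symmetric] by simp
  next
    case False
    have "(r + int m) mod (2 * int m) = (r - int m + 2 * int m) mod (2 * int m)"
      by (simp add: algebra_simps)
    also have "\<dots> = (r - int m) mod (2 * int m)" by (rule mod_add_self2)
    also have "\<dots> = r - int m" using r False by (intro mod_pos_pos_trivial) auto
    finally have "(t + int m) mod (2 * int m) = r - int m" unfolding shift .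
    then show ?thesis using False r unfolding tent_def r_def[symmetric] by simp
  qed
qed

lemma tent_antiperiodic':
  assumes "1 \<le> m" shows "tent m (t - int m) = - tent m t"
  using tent_antiperiodic[OF assms, of "t - int m"] by simp

lemma tent_unit_step:
  assumes "1 \<le> m" shows "\<bar>tent m (t + 1) - tent m t\<bar> = 1"
proof -
  define r where "r = t mod (2 * int m)"
  have r: "0 \<le> r" "r < 2 * int m" using assms by (auto simp: r_def)
  show ?thesis
  proof (cases "r + 1 < 2 * int m")
    case True
    then have "(t + 1) mod (2 * int m) = r + 1"
      using r unfolding r_def by (metis mod_add_left_eq mod_pos_pos_trivial add_nonneg_nonneg zero_le_one)
    moreover have "r + 1 \<le> int m \<or> int m \<le> r" by linarith
    then have "real_of_int r + 1 \<le> real m \<or> real m \<le> real_of_int r"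
      by (metis of_int_1 of_int_add of_int_le_iff of_int_of_nat_eq)
    ultimately show ?thesis unfolding tent_def r_def[symmetric] by auto
  next
    case False
    then have rr: "r = 2 * int m - 1" using r by simp
    then have "(t + 1) mod (2 * int m) = 0"
      unfolding r_def by (metis add.commute diff_add_cancel mod_add_right_eq mod_self)
    then show ?thesis using rr assms unfolding tent_def r_def[symmetric] by simp
  qed
qed

lemma tent_sign_step:
  assumes "1 \<le> m" "e = 1 \<or> e = -1" shows "\<bar>tent m (t + e) - tent m t\<bar> = 1"
  using assms(2) tent_unit_step[OF assms(1), of t] tent_unit_step[OF assms(1), of "t - 1"] by auto

lemma sum_abs_centered: "(\<Sum>r<N. \<bar>real N / 2 - real r\<bar>) \<ge> real N ^ 2 / 4"
proof (induction N rule: less_induct)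
  case (less N)
  show ?case
  proof (cases "N < 2")
    case True
    then have "N = 0 \<or> N = 1" by auto
    then show ?thesis by auto
  next
    case False
    then obtain K where K: "N = K + 2" by (metis add.commute le_Suc_ex not_less)
    have "(\<Sum>r<N. \<bar>real N / 2 - real r\<bar>)
        = \<bar>real N / 2\<bar> + (\<Sum>r<K+1. \<bar>real N / 2 - real (Suc r)\<bar>)"
      using sum.lessThan_Suc_shift[of "\<lambda>r. \<bar>real N / 2 - real r\<bar>" "K+1"] unfolding K by simp
    also have "(\<Sum>r<K+1. \<bar>real N / 2 - real (Suc r)\<bar>) = (\<Sum>r<K+1. \<bar>real K / 2 - real r\<bar>)"
      unfolding K by (intro sum.cong) (auto simp: field_simps)
    also have "\<dots> = (\<Sum>r<K. \<bar>real K / 2 - real r\<bar>) + real K / 2" by simp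
    finally have "(\<Sum>r<N. \<bar>real N / 2 - real r\<bar>)
        = \<bar>real N / 2\<bar> + ((\<Sum>r<K. \<bar>real K / 2 - real r\<bar>) + real K / 2)" .
    moreover have "\<bar>real N / 2\<bar> = real K / 2 + 1" unfolding K by simp
    moreover have "(\<Sum>r<K. \<bar>real K / 2 - real r\<bar>) \<ge> real K ^ 2 / 4" using less K by simp
    moreover have "real N ^ 2 / 4 = real K ^ 2 / 4 + real K + 1"
      unfolding K by (simp add: power2_eq_square field_simps)
    ultimately show ?thesis by linarith
  qed
qed

lemma tent_abs_sum:
  assumes "1 \<le> m" shows "(\<Sum>t\<in>{0..<2 * int m}. \<bar>tent m t\<bar>) \<ge> real m ^ 2 / 2"
proof -
  have halves: "{0..<2 * int m} = {0..<int m} \<union> (\<lambda>t. t + int m) ` {0..<int m}"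
    by auto
  have "(\<Sum>t\<in>{0..<2 * int m}. \<bar>tent m t\<bar>)
      = (\<Sum>t\<in>{0..<int m}. \<bar>tent m t\<bar>) + (\<Sum>t\<in>{0..<int m}. \<bar>tent m (t + int m)\<bar>)"
    unfolding halves
    by (subst sum.union_disjoint) (auto simp: sum.reindex simp del: image_add_atLeastLessThan')
  also have "\<dots> = 2 * (\<Sum>t\<in>{0..<int m}. \<bar>tent m t\<bar>)"
    using tent_antiperiodic[OF assms] by simp
  also have "(\<Sum>t\<in>{0..<int m}. \<bar>tent m t\<bar>) = (\<Sum>r<m. \<bar>real m / 2 - real r\<bar>)"
  proof -
    have "{0..<int m} = int ` {..<m}"
      using image_int_atLeastLessThan[of 0 m] by (simp add: lessThan_atLeast0)
    then show ?thesis by (simp add: sum.reindex tent_def)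
  qed
  finally show ?thesis using sum_abs_centered[of m] by simp
qed

lemma finite_torus: "finite (torus m n)"
  by (simp add: torus_def finite_PiE)

lemma card_torus: "card (torus m n) = (2 * m) ^ n"
  by (simp add: torus_def card_PiE nat_mult_distrib power_mult_distrib)

lemma card_signs: "card (signs n) = 2 ^ n"
  by (simp add: signs_def card_PiE numeral_2_eq_2)

lemma sign_cases: "d \<in> signs n \<Longrightarrow> j \<in> {1..n} \<Longrightarrow> d j = 1 \<or> d j = -1"
  by (auto simp: signs_def PiE_iff)

lemma tadd_apply: "j \<in> {1..n} \<Longrightarrow> tadd m n x v j = (x j + v j) mod (2 * int m)"
  by (simp add: tadd_def)

lemma tadd_in_torus: "1 \<le> m \<Longrightarrow> tadd m n x v \<in> torus m n"
  by (auto simp: torus_def tadd_def PiE_iff)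

lemma tadd_cancel:
  assumes "x \<in> torus m n" shows "tadd m n (tadd m n x v) (\<lambda>j. - v j) = x"
proof (rule ext)
  fix j
  show "tadd m n (tadd m n x v) (\<lambda>j. - v j) j = x j"
  proof (cases "j \<in> {1..n}")
    case True
    then have "0 \<le> x j" "x j < 2 * int m" using assms by (auto simp: torus_def PiE_iff)
    then show ?thesis using True by (simp add: tadd_def mod_diff_left_eq)
  next
    case False
    then show ?thesis using PiE_arb[OF assms[unfolded torus_def] False] by (auto simp: tadd_def)
  qed
qed

lemma sum_torus_translate:
  assumes "1 \<le> m"
  shows "(\<Sum>x\<in>torus m n. \<Phi> (tadd m n x v)) = (\<Sum>x\<in>torus m n. \<Phi> x)"
proof -
  have "bij_betw (\<lambda>x. tadd m n x v) (torus m n) (torus m n)"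
    by (rule bij_betw_byWitness[where f'="\<lambda>x. tadd m n x (\<lambda>j. - v j)"])
       (use assms tadd_in_torus tadd_cancel[of _ m n v] tadd_cancel[of _ m n "\<lambda>j. - v j"] in auto)
  then show ?thesis by (rule sum.reindex_bij_betw)
qed

definition reflection :: "nat \<Rightarrow> (nat \<Rightarrow> int) \<Rightarrow> nat \<Rightarrow> int" where
  "reflection m d = (\<lambda>j. if d j = 1 then 0 else int m)"

lemma tent_reflection:
  assumes m: "1 \<le> m" and d: "d \<in> signs n" and j: "j \<in> {1..n}"
  shows "tent m (tadd m n x (reflection m d) j + e) = real_of_int (d j) * tent m (x j + e)"
proof -
  define M where "M = 2 * int m"
  have "tent m (tadd m n x (reflection m d) j + e) = tent m ((x j + reflection m d j) mod M + e)"
    using j by (simp add: tadd_apply M_def)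
  also have "\<dots> = tent m (((x j + reflection m d j) mod M + e) mod M)"
    unfolding M_def by (rule tent_mod[symmetric])
  also have "((x j + reflection m d j) mod M + e) mod M = (x j + e + reflection m d j) mod M"
    using mod_add_left_eq[of "x j + reflection m d j" M e] by (simp add: ac_simps)
  also have "tent m \<dots> = tent m (x j + e + reflection m d j)"
    unfolding M_def by (rule tent_mod)
  finally show ?thesis
    using sign_cases[OF d j] tent_antiperiodic[OF m] by (auto simp: reflection_def)
qed

definition sign_twist :: "nat \<Rightarrow> (nat \<Rightarrow> int) \<Rightarrow> (nat \<Rightarrow> int) \<Rightarrow> nat \<Rightarrow> int" where
  "sign_twist n c d = restrict (\<lambda>j. c j * d j) {1..n}"

lemma sum_sign_twist:
  assumes c: "\<forall>j\<in>{1..n}. c j \<in> {-1, 1}"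
  shows "(\<Sum>d\<in>signs n. \<Phi> (sign_twist n c d)) = (\<Sum>d\<in>signs n. \<Phi> d)"
proof -
  have sign_mult: "a * b \<in> {-1, 1}" if "a \<in> {-1, 1}" "b \<in> {-1, 1}" for a b :: int
    using that by auto
  have twist_in: "sign_twist n c d \<in> signs n" if "d \<in> signs n" for d
    using that c sign_mult unfolding signs_def sign_twist_def by (auto simp: PiE_iff)
  have involution: "sign_twist n c (sign_twist n c d) = d" if "d \<in> signs n" for d
  proof (rule ext)
    fix j
    show "sign_twist n c (sign_twist n c d) j = d j"
    proof (cases "j \<in> {1..n}")
      case True
      then have "c j \<in> {-1, 1}" using c by blast
      then have "c j * c j = 1" by auto
      then show ?thesis using True unfolding sign_twist_def by (simp add: mult.assoc[symmetric])
    next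
      case False
      then show ?thesis
        using PiE_arb[OF that[unfolded signs_def] False] unfolding sign_twist_def by auto
    qed
  qed
  have "bij_betw (sign_twist n c) (signs n) (signs n)"
    by (rule bij_betw_byWitness[where f'="sign_twist n c"]) (use twist_in involution in auto)
  then show ?thesis by (rule sum.reindex_bij_betw)
qed

(* Sign symmetrisation: if the coefficients a_j are odd under the reflections, then
   averaging ||sum_j a_j(x) z_j||^p over the torus is the same as averaging over random
   signs with coefficients |a_j(x)|. *)
lemma sign_average:
  fixes a :: "(nat \<Rightarrow> int) \<Rightarrow> nat \<Rightarrow> real" and z :: "nat \<Rightarrow> 'a::real_normed_vector"
  assumes m: "1 \<le> m" and J: "J \<subseteq> {1..n}"
    and odd: "\<And>d x j. d \<in> signs n \<Longrightarrow> j \<in> J \<Longrightarrow>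
                 a (tadd m n x (reflection m d)) j = real_of_int (d j) * a x j"
  shows "2 ^ n * (\<Sum>x\<in>torus m n. norm (\<Sum>j\<in>J. a x j *\<^sub>R z j) powr p)
       = (\<Sum>x\<in>torus m n. \<Sum>d\<in>signs n. norm (\<Sum>j\<in>J. (real_of_int (d j) * \<bar>a x j\<bar>) *\<^sub>R z j) powr p)"
proof -
  define \<Psi> where "\<Psi> x d = norm (\<Sum>j\<in>J. (real_of_int (d j) * a x j) *\<^sub>R z j) powr p" for x d
  have reflected: "(\<Sum>x\<in>torus m n. norm (\<Sum>j\<in>J. a x j *\<^sub>R z j) powr p) = (\<Sum>x\<in>torus m n. \<Psi> x d)"
    if d: "d \<in> signs n" for d
  proof -
    have "(\<Sum>x\<in>torus m n. \<Psi> x d)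
        = (\<Sum>x\<in>torus m n. norm (\<Sum>j\<in>J. a (tadd m n x (reflection m d)) j *\<^sub>R z j) powr p)"
      unfolding \<Psi>_def using d by (simp add: odd)
    also have "\<dots> = (\<Sum>x\<in>torus m n. norm (\<Sum>j\<in>J. a x j *\<^sub>R z j) powr p)"
      by (rule sum_torus_translate[OF m])
    finally show ?thesis by simp
  qed
  have twisted: "(\<Sum>d\<in>signs n. \<Psi> x d)
      = (\<Sum>d\<in>signs n. norm (\<Sum>j\<in>J. (real_of_int (d j) * \<bar>a x j\<bar>) *\<^sub>R z j) powr p)" for x
  proof -
    define c where "c j = (if a x j \<ge> 0 then 1 else (-1::int))" for j
    define \<Phi> where "\<Phi> d = norm (\<Sum>j\<in>J. (real_of_int (d j) * \<bar>a x j\<bar>) *\<^sub>R z j) powr p" for d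
    have "\<Psi> x d = \<Phi> (sign_twist n c d)" for d
      unfolding \<Psi>_def \<Phi>_def
      by (intro arg_cong[where f="\<lambda>t. norm t powr p"] sum.cong refl)
         (use J in \<open>auto simp: sign_twist_def c_def\<close>)
    then have "(\<Sum>d\<in>signs n. \<Psi> x d) = (\<Sum>d\<in>signs n. \<Phi> (sign_twist n c d))" by simp
    also have "\<dots> = (\<Sum>d\<in>signs n. \<Phi> d)" by (rule sum_sign_twist) (auto simp: c_def)
    finally show ?thesis unfolding \<Phi>_def .
  qed
  have "(\<Sum>x\<in>torus m n. \<Sum>d\<in>signs n. \<Psi> x d) = (\<Sum>d\<in>signs n. \<Sum>x\<in>torus m n. \<Psi> x d)"
    by (rule sum.swap)
  also have "\<dots> = (\<Sum>d\<in>signs n. \<Sum>x\<in>torus m n. norm (\<Sum>j\<in>J. a x j *\<^sub>R z j) powr p)"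
    using reflected by simp
  also have "\<dots> = 2 ^ n * (\<Sum>x\<in>torus m n. norm (\<Sum>j\<in>J. a x j *\<^sub>R z j) powr p)"
    by (simp add: card_signs)
  finally show ?thesis by (simp only: twisted)
qed

lemma sum_PiE_coordinate:
  assumes "j \<in> I" "finite I"
  shows "(\<Sum>x\<in>PiE I (\<lambda>_. B). h (x j)) = real (card B) ^ (card I - 1) * (\<Sum>b\<in>B. h b)"
proof -
  define J where "J = I - {j}"
  have I: "I = insert j J" "j \<notin> J" "finite J" using assms by (auto simp: J_def)
  have "(\<Sum>x\<in>PiE I (\<lambda>_. B). h (x j))
      = (\<Sum>x\<in>(\<lambda>(y, g). g(j := y)) ` (B \<times> PiE J (\<lambda>_. B)). h (x j))"
    using I PiE_insert_eq by metis
  also have "\<dots> = (\<Sum>(y, g)\<in>B \<times> PiE J (\<lambda>_. B). h y)"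
    by (subst sum.reindex)
       (use inj_combinator[OF I(2), of "\<lambda>_. B"] in \<open>auto simp: case_prod_beta intro!: sum.cong\<close>)
  also have "\<dots> = (\<Sum>y\<in>B. real (card (PiE J (\<lambda>_. B))) * h y)"
    by (simp add: sum.cartesian_product[symmetric])
  also have "card (PiE J (\<lambda>_. B)) = card B ^ card J" using I by (simp add: card_PiE)
  also have "card J = card I - 1" using assms by (simp add: J_def)
  finally show ?thesis by (simp add: sum_distrib_left)
qed

(* The library proves convexity of x powr p on (0,oo); we need it on [0,oo). *)
lemma convex_on_powr_nonneg:
  assumes "p \<ge> 1" shows "convex_on {0..} (\<lambda>x::real. x powr p)"
proof (rule convex_onI)
  show "convex {0::real..}" by simp
  fix t x y :: real assume t: "0 < t" "t < 1" and xy: "x \<in> {0..}" "y \<in> {0..}"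
  have below: "s powr p \<le> s" if "0 \<le> s" "s \<le> 1" for s :: real
    using powr_mono'[of 1 p s] that assms by simp
  show "((1 - t) *\<^sub>R x + t *\<^sub>R y) powr p \<le> (1 - t) * x powr p + t * y powr p"
  proof (cases "x > 0 \<and> y > 0")
    case True
    then show ?thesis using powr_convex[OF assms] t unfolding convex_on_def by auto
  next
    case False
    then have "x = 0 \<or> y = 0" using xy by auto
    then show ?thesis
    proof
      assume "x = 0"
      have "(t * y) powr p = t powr p * y powr p" using t xy by (simp add: powr_mult)
      also have "\<dots> \<le> t * y powr p" using below[of t] t by (intro mult_right_mono) auto
      finally show ?thesis using \<open>x = 0\<close> by simp
    next
      assume "y = 0"
      have "((1 - t) * x) powr p = (1 - t) powr p * x powr p" using t xy by (simp add: powr_mult)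
      also have "\<dots> \<le> (1 - t) * x powr p" using below[of "1 - t"] t by (intro mult_right_mono) auto
      finally show ?thesis using \<open>y = 0\<close> by simp
    qed
  qed
qed

lemma norm_mean_powr_le:
  fixes v :: "'a \<Rightarrow> 'z::real_normed_vector"
  assumes "finite X" "X \<noteq> {}" "1 \<le> p"
  shows "real (card X) * norm ((1 / real (card X)) *\<^sub>R (\<Sum>x\<in>X. v x)) powr p
       \<le> (\<Sum>x\<in>X. norm (v x) powr p)"
proof -
  define N where "N = real (card X)"
  have N: "N > 0" using assms by (simp add: N_def card_gt_0_iff)
  have "norm ((1 / N) *\<^sub>R (\<Sum>x\<in>X. v x)) \<le> (1 / N) * (\<Sum>x\<in>X. norm (v x))"
    using N by (simp add: norm_sum divide_right_mono)
  also have "\<dots> = (\<Sum>x\<in>X. (1 / N) *\<^sub>R norm (v x))" by (simp add: sum_distrib_left)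
  finally have "norm ((1 / N) *\<^sub>R (\<Sum>x\<in>X. v x)) powr p \<le> (\<Sum>x\<in>X. (1 / N) *\<^sub>R norm (v x)) powr p"
    using assms by (intro powr_mono2) auto
  also have "\<dots> \<le> (\<Sum>x\<in>X. (1 / N) * norm (v x) powr p)"
    by (rule convex_on_sum[OF assms(1,2) convex_on_powr_nonneg[OF assms(3)]])
       (use N assms in \<open>auto simp: N_def\<close>)
  also have "\<dots> = (1 / N) * (\<Sum>x\<in>X. norm (v x) powr p)" by (simp add: sum_distrib_left)
  finally show ?thesis using N by (simp add: N_def field_simps)
qed

(* Jensen over the torus: averaging the weights |tent(x_j)| (each of mean >= m/4) gives a
   lower bound by the unweighted signed sum. *)
lemma tent_weighted_lower:
  fixes z :: "nat \<Rightarrow> 'a::real_normed_vector"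
  assumes m: "1 \<le> m" and p: "1 \<le> p" and S: "S \<subseteq> {1..n}"
  shows "(\<Sum>x\<in>torus m n. norm (\<Sum>j\<in>S. (real_of_int (d j) * \<bar>tent m (x j)\<bar>) *\<^sub>R z j) powr p)
       \<ge> real ((2 * m) ^ n) * (real m / 4) powr p * norm (\<Sum>j\<in>S. real_of_int (d j) *\<^sub>R z j) powr p"
proof -
  define N where "N = real ((2 * m) ^ n)"
  have card_N: "real (card (torus m n)) = N" by (simp add: card_torus N_def)
  have N: "N > 0" using m by (simp add: N_def)
  define A where "A = (\<Sum>t\<in>{0..<2 * int m}. \<bar>tent m t\<bar>) / (2 * real m)"
  have A: "A \<ge> real m / 4"
    using tent_abs_sum[OF m] m by (simp add: A_def field_simps power2_eq_square)
  have coordinate_sum: "(\<Sum>x\<in>torus m n. \<bar>tent m (x j)\<bar>) = N * A" if j: "j \<in> {1..n}" for j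
  proof -
    have "(\<Sum>x\<in>torus m n. \<bar>tent m (x j)\<bar>)
        = real (2 * m) ^ (n - 1) * (\<Sum>t\<in>{0..<2 * int m}. \<bar>tent m t\<bar>)"
      unfolding torus_def
      using sum_PiE_coordinate[OF j, where h="\<lambda>t. \<bar>tent m t\<bar>" and B="{0..<2 * int m}"] by simp
    moreover have "real (2 * m) ^ n = real (2 * m) * real (2 * m) ^ (n - 1)"
      using j by (simp add: power_eq_if)
    ultimately show ?thesis unfolding N_def A_def using m by (simp add: field_simps)
  qed
  have mean: "(1 / N) *\<^sub>R
        (\<Sum>x\<in>torus m n. \<Sum>j\<in>S. (real_of_int (d j) * \<bar>tent m (x j)\<bar>) *\<^sub>R z j)
      = A *\<^sub>R (\<Sum>j\<in>S. real_of_int (d j) *\<^sub>R z j)"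
  proof -
    have "(\<Sum>x\<in>torus m n. \<Sum>j\<in>S. (real_of_int (d j) * \<bar>tent m (x j)\<bar>) *\<^sub>R z j)
        = (\<Sum>j\<in>S. (real_of_int (d j) * (\<Sum>x\<in>torus m n. \<bar>tent m (x j)\<bar>)) *\<^sub>R z j)"
      by (subst sum.swap) (simp add: scaleR_sum_left[symmetric] sum_distrib_left)
    also have "\<dots> = (\<Sum>j\<in>S. (real_of_int (d j) * (N * A)) *\<^sub>R z j)"
      using S coordinate_sum by (intro sum.cong) auto
    finally show ?thesis using N by (simp add: scaleR_sum_right mult.commute)
  qed
  have "torus m n \<noteq> {}"
    using m card_torus[of m n] by (intro notI) simp
  define w where "w = norm (\<Sum>j\<in>S. real_of_int (d j) *\<^sub>R z j) powr p"
  have "N * (real m / 4) powr p * w \<le> N * (A powr p * w)"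
    using N A m p unfolding w_def mult.assoc by (intro mult_left_mono mult_right_mono powr_mono2) auto
  also have "\<dots> = N * norm (A *\<^sub>R (\<Sum>j\<in>S. real_of_int (d j) *\<^sub>R z j)) powr p"
    using A m unfolding w_def by (simp add: powr_mult)
  also have "\<dots> \<le> (\<Sum>x\<in>torus m n. norm (\<Sum>j\<in>S. (real_of_int (d j) * \<bar>tent m (x j)\<bar>) *\<^sub>R z j) powr p)"
    using norm_mean_powr_le[OF finite_torus \<open>torus m n \<noteq> {}\<close> p,
      of "\<lambda>x. \<Sum>j\<in>S. (real_of_int (d j) * \<bar>tent m (x j)\<bar>) *\<^sub>R z j"]
    unfolding card_N mean .
  finally show ?thesis unfolding N_def w_def .
qed

definition test_function :: "nat \<Rightarrow> nat \<Rightarrow> (nat \<Rightarrow> 'z::real_vector) \<Rightarrow> (nat \<Rightarrow> int) \<Rightarrow> 'z" where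
  "test_function m n z x = (\<Sum>j=1..n. tent m (x j) *\<^sub>R z j)"

lemma test_function_increment:
  "test_function m n z (tadd m n x v) - test_function m n z x
     = (\<Sum>j=1..n. (tent m (x j + v j) - tent m (x j)) *\<^sub>R z j)"
  unfolding test_function_def sum_subtractf[symmetric] scaleR_diff_left
  by (intro sum.cong refl) (simp add: tadd_apply tent_mod)

lemma edge_term:
  assumes m: "1 \<le> m" and j: "j \<in> {1..n}"
  shows "(\<Sum>x\<in>torus m n. norm (test_function m n z (tadd m n x (ebasis j)) - test_function m n z x) powr p)
       = real ((2 * m) ^ n) * norm (z j) powr p"
proof -
  have "test_function m n z (tadd m n x (ebasis j)) - test_function m n z x
      = (tent m (x j + 1) - tent m (x j)) *\<^sub>R z j" for x
  proof -
    have "test_function m n z (tadd m n x (ebasis j)) - test_function m n z x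
        = (\<Sum>i=1..n. if i = j then (tent m (x j + 1) - tent m (x j)) *\<^sub>R z j else 0)"
      unfolding test_function_increment by (intro sum.cong refl) (auto simp: ebasis_def)
    then show ?thesis using j by simp
  qed
  then show ?thesis using tent_unit_step[OF m] by (simp add: card_torus)
qed

lemma diagonal_term:
  fixes z :: "nat \<Rightarrow> 'a::real_normed_vector"
  assumes m: "1 \<le> m" and eps: "eps \<in> signs n"
  shows "2 ^ n * (\<Sum>x\<in>torus m n. norm (test_function m n z (tadd m n x eps) - test_function m n z x) powr p)
       = real ((2 * m) ^ n) * (\<Sum>d\<in>signs n. norm (\<Sum>j=1..n. real_of_int (d j) *\<^sub>R z j) powr p)"
proof -
  define a where "a x j = tent m (x j + eps j) - tent m (x j)" for x j
  have "2 ^ n * (\<Sum>x\<in>torus m n. norm (test_function m n z (tadd m n x eps) - test_function m n z x) powr p)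
      = 2 ^ n * (\<Sum>x\<in>torus m n. norm (\<Sum>j=1..n. a x j *\<^sub>R z j) powr p)"
    unfolding test_function_increment a_def ..
  also have "\<dots> = (\<Sum>x\<in>torus m n. \<Sum>d\<in>signs n. norm (\<Sum>j=1..n. (real_of_int (d j) * \<bar>a x j\<bar>) *\<^sub>R z j) powr p)"
    by (rule sign_average[OF m order_refl])
       (simp add: a_def tent_reflection[OF m] tent_reflection[OF m, where e=0, simplified]
          right_diff_distrib)
  also have "\<dots> = (\<Sum>x\<in>torus m n. \<Sum>d\<in>signs n. norm (\<Sum>j=1..n. real_of_int (d j) *\<^sub>R z j) powr p)"
    using tent_sign_step[OF m sign_cases[OF eps]] by (simp add: a_def)
  finally show ?thesis by (simp add: card_torus)
qed

lemma face_increment: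
  assumes m: "1 \<le> m" and S: "S \<subseteq> {1..n}" and eps: "eps \<in> signs n"
  shows "test_function m n z (tadd m n x (\<lambda>j. int m * epsS eps S j)) - test_function m n z x
       = (- 2) *\<^sub>R (\<Sum>j\<in>S. tent m (x j) *\<^sub>R z j)"
proof -
  have "tent m (x j + int m * epsS eps S j) - tent m (x j) = (if j \<in> S then - 2 * tent m (x j) else 0)"
    if "j \<in> {1..n}" for j
    using sign_cases[OF eps that] tent_antiperiodic[OF m] tent_antiperiodic'[OF m]
    by (auto simp: epsS_def)
  then have "test_function m n z (tadd m n x (\<lambda>j. int m * epsS eps S j)) - test_function m n z x
      = (\<Sum>j=1..n. if j \<in> S then (- 2 * tent m (x j)) *\<^sub>R z j else 0)"
    unfolding test_function_increment by (intro sum.cong) auto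
  also have "\<dots> = (- 2) *\<^sub>R (\<Sum>j\<in>S. tent m (x j) *\<^sub>R z j)"
    using S by (simp add: sum.inter_restrict[symmetric] Int_absorb1 scaleR_sum_right)
  finally show ?thesis .
qed

lemma face_profile_lower:
  fixes z :: "nat \<Rightarrow> 'a::real_normed_vector"
  assumes m: "1 \<le> m" and p: "1 \<le> p" and S: "S \<subseteq> {1..n}"
  shows "2 ^ n * (\<Sum>x\<in>torus m n. norm (\<Sum>j\<in>S. tent m (x j) *\<^sub>R z j) powr p)
       \<ge> real ((2 * m) ^ n) * (real m / 4) powr p
         * (\<Sum>d\<in>signs n. norm (\<Sum>j\<in>S. real_of_int (d j) *\<^sub>R z j) powr p)"
proof -
  have "2 ^ n * (\<Sum>x\<in>torus m n. norm (\<Sum>j\<in>S. tent m (x j) *\<^sub>R z j) powr p)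
      = (\<Sum>x\<in>torus m n. \<Sum>d\<in>signs n.
           norm (\<Sum>j\<in>S. (real_of_int (d j) * \<bar>tent m (x j)\<bar>) *\<^sub>R z j) powr p)"
    using tent_reflection[OF m, where e=0] S by (intro sign_average[OF m S]) auto
  also have "\<dots> = (\<Sum>d\<in>signs n. \<Sum>x\<in>torus m n.
           norm (\<Sum>j\<in>S. (real_of_int (d j) * \<bar>tent m (x j)\<bar>) *\<^sub>R z j) powr p)"
    by (rule sum.swap)
  also have "\<dots> \<ge> (\<Sum>d\<in>signs n. real ((2 * m) ^ n) * (real m / 4) powr p
           * norm (\<Sum>j\<in>S. real_of_int (d j) *\<^sub>R z j) powr p)"
    by (intro sum_mono tent_weighted_lower[OF m p S])
  finally show ?thesis by (simp add: sum_distrib_left)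
qed

lemma face_term:
  fixes z :: "nat \<Rightarrow> 'a::real_normed_vector"
  assumes m: "1 \<le> m" and p: "1 \<le> p" and S: "S \<subseteq> {1..n}" and eps: "eps \<in> signs n"
  shows "2 ^ n * (\<Sum>x\<in>torus m n. norm (test_function m n z (tadd m n x (\<lambda>j. int m * epsS eps S j))
                                        - test_function m n z x) powr p / real m powr p)
       \<ge> real ((2 * m) ^ n) * (1 / 2) powr p
         * (\<Sum>d\<in>signs n. norm (\<Sum>j\<in>S. real_of_int (d j) *\<^sub>R z j) powr p)"
proof -
  define N where "N = real ((2 * m) ^ n)"
  define Q where "Q = (\<Sum>d\<in>signs n. norm (\<Sum>j\<in>S. real_of_int (d j) *\<^sub>R z j) powr p)"
  define F where "F = (\<Sum>x\<in>torus m n. norm (\<Sum>j\<in>S. tent m (x j) *\<^sub>R z j) powr p)"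
  have "2 powr p / real m powr p * (N * (real m / 4) powr p) = N * (1 / 2) powr p"
    using m by (simp add: powr_mult[symmetric] powr_divide[symmetric])
  then have "N * (1 / 2) powr p * Q = 2 powr p / real m powr p * (N * (real m / 4) powr p * Q)"
    by (simp only: mult.assoc[symmetric])
  also have "\<dots> \<le> 2 powr p / real m powr p * (2 ^ n * F)"
    using face_profile_lower[OF m p S, of z] unfolding N_def Q_def F_def
    by (intro mult_left_mono) auto
  also have "\<dots> = 2 ^ n * (\<Sum>x\<in>torus m n. norm (test_function m n z (tadd m n x (\<lambda>j. int m * epsS eps S j))
                                        - test_function m n z x) powr p / real m powr p)"
    unfolding face_increment[OF m S eps] F_def
    by (simp add: powr_mult sum_distrib_left sum_divide_distrib ac_simps)
  finally show ?thesis unfolding N_def Q_def .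
qed

lemma pi_constant: "0 \<le> p \<Longrightarrow> (2 / pi) powr (2 * p) \<le> (1 / 2) powr p"
proof -
  assume p: "0 \<le> p"
  have "4 / pi ^ 2 \<le> 1 / 2"
    using power_mono[OF less_imp_le[OF pi_gt3], of 2] by (simp add: field_simps)
  moreover have "(2 / pi) powr (2 * p) = (4 / pi ^ 2) powr p"
    by (simp add: powr_powr[symmetric] power2_eq_square powr_numeral)
  ultimately show ?thesis using p by (simp add: powr_mono2)
qed

lemma edge_terms_total:
  assumes "1 \<le> m"
  shows "(\<Sum>j=1..n. \<Sum>x\<in>torus m n. norm (test_function m n z (tadd m n x (ebasis j)) - test_function m n z x) powr p)
       = real ((2 * m) ^ n) * (\<Sum>j=1..n. norm (z j) powr p)"
  unfolding sum_distrib_left by (intro sum.cong refl edge_term[OF assms])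

lemma diagonal_terms_total:
  fixes z :: "nat \<Rightarrow> 'a::real_normed_vector"
  assumes "1 \<le> m"
  shows "(\<Sum>eps\<in>signs n. \<Sum>x\<in>torus m n. norm (test_function m n z (tadd m n x eps) - test_function m n z x) powr p)
       = real ((2 * m) ^ n) * (\<Sum>d\<in>signs n. norm (\<Sum>j=1..n. real_of_int (d j) *\<^sub>R z j) powr p)"
proof -
  have "(\<Sum>x\<in>torus m n. norm (test_function m n z (tadd m n x eps) - test_function m n z x) powr p)
      = real ((2 * m) ^ n) / 2 ^ n * (\<Sum>d\<in>signs n. norm (\<Sum>j=1..n. real_of_int (d j) *\<^sub>R z j) powr p)"
    if "eps \<in> signs n" for eps
    using diagonal_term[OF assms that, of z p] by (simp add: field_simps)
  then show ?thesis by (simp add: card_signs)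
qed

lemma face_terms_total:
  fixes z :: "nat \<Rightarrow> 'a::real_normed_vector"
  assumes m: "1 \<le> m" and p: "1 \<le> p" and faces: "\<forall>S\<in>\<S>. S \<subseteq> {1..n}"
  shows "(\<Sum>S\<in>\<S>. \<Sum>eps\<in>signs n. \<Sum>x\<in>torus m n.
            norm (test_function m n z (tadd m n x (\<lambda>j. int m * epsS eps S j)) - test_function m n z x) powr p
            / real m powr p)
       \<ge> real ((2 * m) ^ n) * (1 / 2) powr p
         * (\<Sum>S\<in>\<S>. \<Sum>d\<in>signs n. norm (\<Sum>j\<in>S. real_of_int (d j) *\<^sub>R z j) powr p)"
proof -
  have "(\<Sum>S\<in>\<S>. \<Sum>eps\<in>signs n. \<Sum>x\<in>torus m n.
            norm (test_function m n z (tadd m n x (\<lambda>j. int m * epsS eps S j)) - test_function m n z x) powr p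
            / real m powr p)
      \<ge> (\<Sum>S\<in>\<S>. \<Sum>eps\<in>signs n. real ((2 * m) ^ n) * (1 / 2) powr p / 2 ^ n
            * (\<Sum>d\<in>signs n. norm (\<Sum>j\<in>S. real_of_int (d j) *\<^sub>R z j) powr p))"
  proof (intro sum_mono)
    fix S eps assume "S \<in> \<S>" "eps \<in> signs n"
    then have "2 ^ n * (real ((2 * m) ^ n) * (1 / 2) powr p / 2 ^ n
            * (\<Sum>d\<in>signs n. norm (\<Sum>j\<in>S. real_of_int (d j) *\<^sub>R z j) powr p))
        \<le> 2 ^ n * (\<Sum>x\<in>torus m n.
            norm (test_function m n z (tadd m n x (\<lambda>j. int m * epsS eps S j)) - test_function m n z x) powr p
            / real m powr p)"
      using face_term[OF m p, where S=S and eps=eps and z=z] faces by simp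
    then show "real ((2 * m) ^ n) * (1 / 2) powr p / 2 ^ n
            * (\<Sum>d\<in>signs n. norm (\<Sum>j\<in>S. real_of_int (d j) *\<^sub>R z j) powr p)
        \<le> (\<Sum>x\<in>torus m n.
            norm (test_function m n z (tadd m n x (\<lambda>j. int m * epsS eps S j)) - test_function m n z x) powr p
            / real m powr p)"
      by (rule mult_left_le_imp_le) simp
  qed
  then show ?thesis by (simp add: card_signs sum_distrib_left mult.assoc)
qed

theorem mainTheorem6:
  fixes p \<gamma> :: real and m n k :: nat
  assumes p: "2 \<le> p"
    and gamma: "0 < \<gamma>" "\<gamma> < 1"
    and m: "1 \<le> m"
    and k: "1 \<le> k" "k \<le> n"
    and H: "\<forall>f :: (nat \<Rightarrow> int) \<Rightarrow> 'z::banach.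
      \<gamma> / (2 ^ n * real (n choose k)) *
        (\<Sum>S\<in>{S. S \<subseteq> {1..n} \<and> card S = k}. \<Sum>eps\<in>signs n. \<Sum>x\<in>torus m n.
           norm (f (tadd m n x (\<lambda>j. int m * epsS eps S j)) - f x) powr p / real m powr p)
      \<le> real k / real n * (\<Sum>j=1..n. \<Sum>x\<in>torus m n. norm (f (tadd m n x (ebasis j)) - f x) powr p)
        + (real k / real n) powr (p / 2) / 2 ^ n *
          (\<Sum>eps\<in>signs n. \<Sum>x\<in>torus m n. norm (f (tadd m n x eps) - f x) powr p)"
  shows "\<forall>z :: nat \<Rightarrow> 'z.
      (2 / pi) powr (2 * p) * \<gamma> / (2 ^ n * real (n choose k)) *
        (\<Sum>S\<in>{S. S \<subseteq> {1..n} \<and> card S = k}. \<Sum>eps\<in>signs n.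
           norm (\<Sum>j\<in>S. real_of_int (eps j) *\<^sub>R z j) powr p)
      \<le> real k / real n * (\<Sum>j=1..n. norm (z j) powr p)
        + (real k / real n) powr (p / 2) / 2 ^ n *
          (\<Sum>eps\<in>signs n. norm (\<Sum>j=1..n. real_of_int (eps j) *\<^sub>R z j) powr p)"
proof
  fix z :: "nat \<Rightarrow> 'z"
  define N where "N = real ((2 * m) ^ n)"
  define K where "K = \<gamma> / (2 ^ n * real (n choose k))"
  define Q where "Q = (\<Sum>S\<in>{S. S \<subseteq> {1..n} \<and> card S = k}. \<Sum>eps\<in>signs n.
                        norm (\<Sum>j\<in>S. real_of_int (eps j) *\<^sub>R z j) powr p)"
  define R where "R = real k / real n * (\<Sum>j=1..n. norm (z j) powr p)
        + (real k / real n) powr (p / 2) / 2 ^ n *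
          (\<Sum>eps\<in>signs n. norm (\<Sum>j=1..n. real_of_int (eps j) *\<^sub>R z j) powr p)"
  have K: "K > 0" and N: "N > 0" using gamma k m by (auto simp: K_def N_def)
  note test_instance = H[rule_format, of "test_function m n z",
      unfolded edge_terms_total[OF m] diagonal_terms_total[OF m] K_def[symmetric] N_def[symmetric]]
  have faces: "N * (1 / 2) powr p * Q \<le> (\<Sum>S\<in>{S. S \<subseteq> {1..n} \<and> card S = k}.
      \<Sum>eps\<in>signs n. \<Sum>x\<in>torus m n. norm (test_function m n z (tadd m n x (\<lambda>j. int m * epsS eps S j))
        - test_function m n z x) powr p / real m powr p)"
    unfolding N_def Q_def using p by (intro face_terms_total[OF m]) auto
  have "K * (N * (1 / 2) powr p * Q) \<le> N * R"
    using order_trans[OF mult_left_mono[OF faces] test_instance] K unfolding R_def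
    by (simp add: algebra_simps)
  then have "(1 / 2) powr p * K * Q \<le> R" using N by (simp add: algebra_simps)
  moreover have "(2 / pi) powr (2 * p) * K * Q \<le> (1 / 2) powr p * K * Q"
    using pi_constant[of p] p K unfolding Q_def by (intro mult_right_mono sum_nonneg) auto
  ultimately have "(2 / pi) powr (2 * p) * K * Q \<le> R" by linarith
  then show "(2 / pi) powr (2 * p) * \<gamma> / (2 ^ n * real (n choose k)) *
        (\<Sum>S\<in>{S. S \<subseteq> {1..n} \<and> card S = k}. \<Sum>eps\<in>signs n.
           norm (\<Sum>j\<in>S. real_of_int (eps j) *\<^sub>R z j) powr p)
      \<le> real k / real n * (\<Sum>j=1..n. norm (z j) powr p)
        + (real k / real n) powr (p / 2) / 2 ^ n *
          (\<Sum>eps\<in>signs n. norm (\<Sum>j=1..n. real_of_int (eps j) *\<^sub>R z j) powr p)"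
    by (simp add: K_def Q_def R_def mult.assoc)
qed


end
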